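(* Let $a>0$, let $m$ be a positive integer, and let $l=(l_r,l_0,\dots,l_4)$ be a tuple of nonnegative integers with $s_l:=-l_r+\sum_{i=0}^4 l_i$. Let $f_l=r^{-l_r}x_0^{l_0}x_1^{l_1}\cdots x_4^{l_4}$ on $B_a$, and regard $r_o^m f_l$ as a function on $\tilde{B}_a=B_a\cup L$ by setting it identically zero on $L$. Then $r_o^m f_l$ is of class $C^{k-1}$ on $\tilde{B}_a$ but not of class $C^k$, where $k=\min\{m,m+s_l\}$.
   Context: On $\mathbb{R}^5$ with coordinates $x=(x_0,\dots,x_4)$ put $r=\sqrt{x_1^2+x_2^2+x_3^2+x_4^2}$, $L=\{x: r\le|x_0|\}$, $L_o=\{x: r=|x_0|\}$. Define $r_o=0$ on $L$ and $r_o=\frac{r^2-x_0^2}{r}$ on $\mathbb{R}^5\setminus L$. For $a>0$, $B_a=\{x: 0<r_o<1/a\}$ and $\tilde{B}_a=B_a\cup L$ (an open subset of $\mathbb{R}^5$). *)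

theory Defs
  imports "HOL-Analysis.Analysis"
begin

fun Ck :: "nat \<Rightarrow> 'a::euclidean_space set \<Rightarrow> ('a \<Rightarrow> real) \<Rightarrow> bool" where
  "Ck 0 U f = continuous_on U f"
| "Ck (Suc k) U f =
     ((\<forall>x\<in>U. f differentiable (at x)) \<and>
      (\<forall>i\<in>Basis. Ck k U (\<lambda>x. frechet_derivative f (at x) i)))"

text \<open>Coordinates x = (x_0,...,x_4) on R^5 are x$0,...,x$4.\<close>
definition rr :: "real^5 \<Rightarrow> real" where
  "rr x = sqrt ((x$1)\<^sup>2 + (x$2)\<^sup>2 + (x$3)\<^sup>2 + (x$4)\<^sup>2)"

definition Lcone :: "(real^5) set" where
  "Lcone = {x. rr x \<le> \<bar>x$0\<bar>}"

definition Lo :: "(real^5) set" where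
  "Lo = {x. rr x = \<bar>x$0\<bar>}"

definition r_o :: "real^5 \<Rightarrow> real" where
  "r_o x = (if x \<in> Lcone then 0 else ((rr x)\<^sup>2 - (x$0)\<^sup>2) / rr x)"

definition B :: "real \<Rightarrow> (real^5) set" where
  "B a = {x. 0 < r_o x \<and> r_o x < 1 / a}"

definition Btilde :: "real \<Rightarrow> (real^5) set" where
  "Btilde a = B a \<union> Lcone"

definition f_l :: "nat \<Rightarrow> nat^5 \<Rightarrow> real^5 \<Rightarrow> real" where
  "f_l lr l x = inverse (rr x ^ lr) * (\<Prod>i\<in>UNIV. (x$i) ^ (l$i))"

definition s_l :: "nat \<Rightarrow> nat^5 \<Rightarrow> int" where
  "s_l lr l = - int lr + (\<Sum>i\<in>UNIV. int (l$i))"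

definition g_ml :: "nat \<Rightarrow> nat \<Rightarrow> nat^5 \<Rightarrow> real^5 \<Rightarrow> real" where
  "g_ml m lr l x = (if x \<in> Lcone then 0 else (r_o x) ^ m * f_l lr l x)"

end

theory Submission
  imports Defs
begin

text \<open>Off the cone, a term \<open>c r_o\<^sup>a x\<^sup>\<alpha> / r\<^sup>b\<close> is smooth and each of its partial derivatives is
  a sum of at most four terms of the same shape. Since \<open>r_o(y) \<le> 4 dist(y, L)\<close> and
  \<open>\<bar>x\<^sup>\<alpha>\<bar> \<le> r\<^bsup>|\<alpha>|\<^esup>\<close>, such a term is \<open>O(dist(y, L)\<^sup>n)\<close> near \<open>L\<close> when \<open>a \<ge> n\<close> and
  \<open>a + |\<alpha>| - b \<ge> n\<close>, and a derivative lowers both quantities by at most one. For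
  \<open>r_o\<^sup>m f_l\<close> they are \<open>m\<close> and \<open>m + s_l\<close>, so each derivative of order \<open>j < k\<close> extends by zero to
  a continuous function which, for \<open>j < k - 1\<close>, is differentiable on \<open>L\<close> with derivative zero.

  For the converse, restrict to the segment \<open>t \<mapsto> (t, s/2, s/2, s/2, s/2)\<close>, which enters the
  cone at \<open>t = s\<close>. Inside the cone the function vanishes, so if it were \<open>C\<^sup>k\<close> all its
  \<open>t\<close>-derivatives up to order \<open>k\<close> would vanish at \<open>t = s\<close> and Taylor's theorem would make it
  \<open>o((s - t)\<^sup>k)\<close>. For \<open>k = m\<close> this contradicts \<open>r_o\<^sup>m f_l \<sim> c (s - t)\<^sup>m\<close>. For \<open>k < m\<close> the
  function is homogeneous of degree \<open>k\<close>, so letting \<open>s \<rightarrow> 0\<close> the \<open>k\<close>-th derivative, which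
  vanishes on the \<open>x\<^sub>0\<close>-axis, cannot be continuous at the origin; for \<open>k \<le> 0\<close> the function
  itself is not.\<close>

section \<open>Calculus on real vectors\<close>

lemma exhaust_5:
  fixes x :: 5
  shows "x = 0 \<or> x = 1 \<or> x = 2 \<or> x = 3 \<or> x = 4"
proof (induct x)
  case (of_int z)
  then have "0 \<le> z" "z < 5" by simp_all
  then have "z = 0 \<or> z = 1 \<or> z = 2 \<or> z = 3 \<or> z = 4" by linarith
  then show ?case by (elim disjE) simp_all
qed

lemma UNIV_5: "UNIV = {0, 1, 2, 3, 4::5}"
  using exhaust_5 by auto

lemma sum_5: "sum f (UNIV::5 set) = f 0 + f 1 + f 2 + f 3 + f 4"
  unfolding UNIV_5 by (simp add: ac_simps)

definition has_gradient :: "(real^'n \<Rightarrow> real) \<Rightarrow> ('n \<Rightarrow> real) \<Rightarrow> real^'n \<Rightarrow> bool" where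
  "has_gradient f P x \<longleftrightarrow> (f has_derivative (\<lambda>h. \<Sum>j\<in>UNIV. h$j * P j)) (at x)"

lemma has_gradient_const: "has_gradient (\<lambda>y. c) (\<lambda>j. 0) x"
  unfolding has_gradient_def by simp

lemma has_gradient_component: "has_gradient (\<lambda>y. y$i) (\<lambda>j. if j = i then 1 else 0) x"
  unfolding has_gradient_def
  by (rule has_derivative_eq_rhs[OF bounded_linear_imp_has_derivative[OF bounded_linear_vec_nth]])
     (simp add: if_distrib cong: if_cong)

lemma has_gradient_add:
  "has_gradient f P x \<Longrightarrow> has_gradient g Q x \<Longrightarrow> has_gradient (\<lambda>y. f y + g y) (\<lambda>j. P j + Q j) x"
  unfolding has_gradient_def
  by (rule has_derivative_eq_rhs[OF has_derivative_add]) (auto simp: distrib_left sum.distrib)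

lemma has_gradient_diff:
  "has_gradient f P x \<Longrightarrow> has_gradient g Q x \<Longrightarrow> has_gradient (\<lambda>y. f y - g y) (\<lambda>j. P j - Q j) x"
  unfolding has_gradient_def
  by (rule has_derivative_eq_rhs[OF has_derivative_diff]) (auto simp: right_diff_distrib sum_subtractf)

lemma has_gradient_mult:
  "has_gradient f P x \<Longrightarrow> has_gradient g Q x \<Longrightarrow>
    has_gradient (\<lambda>y. f y * g y) (\<lambda>j. f x * Q j + P j * g x) x"
  unfolding has_gradient_def
  by (rule has_derivative_eq_rhs[OF has_derivative_mult])
     (auto simp: distrib_left sum.distrib sum_distrib_left sum_distrib_right mult_ac)

lemma has_gradient_power:
  "has_gradient f P x \<Longrightarrow> has_gradient (\<lambda>y. f y ^ n) (\<lambda>j. of_nat n * f x ^ (n - 1) * P j) x"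
  unfolding has_gradient_def
  by (rule has_derivative_eq_rhs[OF has_derivative_power]) (auto simp: sum_distrib_left mult_ac)

lemma has_gradient_sqrt:
  assumes "has_gradient f P x" and "f x > 0"
  shows "has_gradient (\<lambda>y. sqrt (f y)) (\<lambda>j. P j / (2 * sqrt (f x))) x"
  using has_derivative_real_sqrt[OF assms(2) assms(1)[unfolded has_gradient_def]]
  unfolding has_gradient_def
  by (rule has_derivative_eq_rhs)
     (intro ext, simp only: sum_distrib_right divide_inverse inverse_mult_distrib,
      intro sum.cong refl, simp only: mult_ac)

lemma has_gradient_inverse:
  "has_gradient f P x \<Longrightarrow> f x \<noteq> 0 \<Longrightarrow> has_gradient (\<lambda>y. inverse (f y)) (\<lambda>j. - (P j / (f x)\<^sup>2)) x"
  unfolding has_gradient_def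
  by (rule has_derivative_eq_rhs[OF Deriv.has_derivative_inverse])
     (auto simp: sum_distrib_left sum_negf power2_eq_square divide_inverse mult_ac)

lemma has_gradient_cong: "has_gradient f P x \<Longrightarrow> (\<And>j. P j = Q j) \<Longrightarrow> has_gradient f Q x"
  unfolding has_gradient_def by simp

lemma has_gradient_transform_within_open:
  "has_gradient f P x \<Longrightarrow> open S \<Longrightarrow> x \<in> S \<Longrightarrow> (\<And>y. y \<in> S \<Longrightarrow> f y = g y) \<Longrightarrow> has_gradient g P x"
  unfolding has_gradient_def by (rule has_derivative_transform_within_open)

lemma has_gradient_imp_differentiable: "has_gradient f P x \<Longrightarrow> f differentiable (at x)"
  unfolding has_gradient_def differentiable_def by blast

lemma has_gradient_imp_isCont: "has_gradient f P x \<Longrightarrow> isCont f x"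
  unfolding has_gradient_def by (rule has_derivative_continuous)

lemma has_gradient_frechet_derivative_axis:
  assumes "has_gradient f P x"
  shows "frechet_derivative f (at x) (axis i 1) = P i"
proof -
  have "frechet_derivative f (at x) = (\<lambda>h. \<Sum>j\<in>UNIV. h$j * P j)"
    using assms unfolding has_gradient_def by (rule frechet_derivative_at[symmetric])
  then show ?thesis by (simp add: axis_def if_distrib[of "\<lambda>u. u * _"] cong: if_cong)
qed

lemma has_real_derivative_along_line:
  assumes "f differentiable (at (p + t *\<^sub>R e))"
  shows "((\<lambda>s. f (p + s *\<^sub>R e)) has_real_derivative frechet_derivative f (at (p + t *\<^sub>R e)) e) (at t)"
proof -
  let ?D = "frechet_derivative f (at (p + t *\<^sub>R e))"
  have fD: "(f has_derivative ?D) (at (p + t *\<^sub>R e))"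
    using assms frechet_derivative_works by blast
  have "((\<lambda>s. p + s *\<^sub>R e) has_derivative (\<lambda>s. s *\<^sub>R e)) (at t)"
    by (intro derivative_eq_intros) auto
  from has_derivative_compose[OF this fD]
  have "((\<lambda>s. f (p + s *\<^sub>R e)) has_derivative (\<lambda>s. ?D (s *\<^sub>R e))) (at t)" .
  moreover have "(\<lambda>s. ?D (s *\<^sub>R e)) = (*) (?D e)"
    using linear_scale[OF has_derivative_linear[OF fD]] by (auto simp: mult.commute)
  ultimately show ?thesis unfolding has_field_derivative_def by simp
qed

lemma isCont_zero_on_right:
  fixes h :: "real \<Rightarrow> real"
  assumes "isCont h s" and "\<And>t. t > s \<Longrightarrow> h t = 0"
  shows "h s = 0"
proof -
  have "(h \<longlongrightarrow> h s) (at_right s)"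
    using assms(1) unfolding isCont_def by (rule filterlim_at_split[THEN iffD1, THEN conjunct2])
  moreover have "\<forall>\<^sub>F t in at_right s. h t = 0"
    using eventually_at_right_less by (rule eventually_mono) (rule assms(2))
  then have "(h \<longlongrightarrow> 0) (at_right s)" by (rule tendsto_eventually)
  ultimately show ?thesis by (rule tendsto_unique[OF trivial_limit_at_right_real])
qed

lemma Ck_subset: "Ck n V f \<Longrightarrow> U \<subseteq> V \<Longrightarrow> Ck n U f"
  by (induct n arbitrary: f) (auto intro: continuous_on_subset)

lemma Ck_imp_continuous_on: "Ck n U f \<Longrightarrow> continuous_on U f"
  by (cases n) (auto intro!: continuous_at_imp_continuous_on differentiable_imp_continuous_within)

fun iterated_partial :: "'a::euclidean_space \<Rightarrow> nat \<Rightarrow> ('a \<Rightarrow> real) \<Rightarrow> 'a \<Rightarrow> real" where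
  "iterated_partial e 0 f = f"
| "iterated_partial e (Suc j) f = (\<lambda>x. frechet_derivative (iterated_partial e j f) (at x) e)"

lemma Ck_iterated_partial:
  "Ck n U f \<Longrightarrow> e \<in> Basis \<Longrightarrow> j \<le> n \<Longrightarrow> Ck (n - j) U (iterated_partial e j f)"
proof (induct j)
  case (Suc j)
  then have "Ck (Suc (n - Suc j)) U (iterated_partial e j f)" by (simp add: Suc_diff_Suc)
  then show ?case using Suc.prems(2) by simp
qed simp

lemma iterated_partial_eq_0_on_open:
  assumes "open V" and "\<And>y. y \<in> V \<Longrightarrow> f y = 0" and "y \<in> V"
  shows "iterated_partial e j f y = 0"
  using assms(3)
proof (induct j arbitrary: y)
  case (Suc j)
  have "(iterated_partial e j f has_derivative (\<lambda>h. 0)) (at y)"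
    by (rule has_derivative_transform_within_open[OF has_derivative_const assms(1) Suc.prems])
       (use Suc.hyps in simp)
  then show ?case by (simp add: frechet_derivative_at[symmetric])
qed (use assms(2) in simp)

section \<open>Geometry of the light cone\<close>

lemma rr_nonneg: "rr x \<ge> 0"
  unfolding rr_def by simp

lemma rr_eq_norm_spatial: "rr x = norm (\<chi> i. if i = 0 then 0 else x$i)"
  unfolding rr_def norm_vec_def L2_set_def by (simp add: sum_5)

lemma abs_component_le_rr: "i \<noteq> 0 \<Longrightarrow> \<bar>x$i\<bar> \<le> rr x"
  unfolding rr_eq_norm_spatial
  using component_le_norm_cart[of "\<chi> i. if i = 0 then 0 else x$i" i] by simp

lemma abs_rr_diff_le: "\<bar>rr y - rr x\<bar> \<le> norm (y - x)"
proof -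
  have "\<bar>rr y - rr x\<bar> \<le> norm ((\<chi> i. if i = 0 then 0 else y$i) - (\<chi> i. if i = 0 then 0 else x$i))"
    unfolding rr_eq_norm_spatial by (rule norm_triangle_ineq3)
  also have "\<dots> \<le> norm (y - x)"
    by (rule norm_le_componentwise_cart) simp
  finally show ?thesis .
qed

lemma continuous_on_rr: "continuous_on S rr"
  unfolding rr_def by (intro continuous_intros)

lemma open_Compl_Lcone: "open (- Lcone)"
proof -
  have "- Lcone = {x. \<bar>x$0\<bar> < rr x}" unfolding Lcone_def by auto
  then show ?thesis by (simp add: open_Collect_less continuous_on_rr continuous_intros)
qed

definition inside_cone :: "(real^5) set" where
  "inside_cone = {x. rr x < \<bar>x$0\<bar>}"

lemma open_inside_cone: "open inside_cone"
  unfolding inside_cone_def by (intro open_Collect_less continuous_intros continuous_on_rr)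

lemma inside_cone_subset_Lcone: "inside_cone \<subseteq> Lcone"
  unfolding inside_cone_def Lcone_def by auto

lemma zero_in_Lcone: "0 \<in> Lcone"
  unfolding Lcone_def rr_def by simp

lemma Lcone_subset_Btilde: "Lcone \<subseteq> Btilde a"
  unfolding Btilde_def by auto

lemma rr_pos_outside: "x \<notin> Lcone \<Longrightarrow> rr x > 0"
  unfolding Lcone_def by auto

lemma abs_component_le_rr_outside: "x \<notin> Lcone \<Longrightarrow> \<bar>x$i\<bar> \<le> rr x"
  using abs_component_le_rr[of i x] unfolding Lcone_def by (cases "i = 0") auto

lemma r_o_outside: "x \<notin> Lcone \<Longrightarrow> r_o x = ((rr x)\<^sup>2 - (x$0)\<^sup>2) / rr x"
  unfolding r_o_def by simp

lemma r_o_bounds_outside: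
  assumes "x \<notin> Lcone"
  shows "0 \<le> r_o x" and "r_o x \<le> rr x"
proof -
  have R: "rr x > 0" "\<bar>x$0\<bar> < rr x" using assms unfolding Lcone_def by auto
  then have "(x$0)\<^sup>2 \<le> (rr x)\<^sup>2" by (simp add: power2_le_iff_abs_le)
  then show "0 \<le> r_o x" "r_o x \<le> rr x"
    using R unfolding r_o_outside[OF assms] by (simp_all add: divide_le_eq power2_eq_square)
qed

lemma r_o_le_dist_Lcone:
  assumes x: "x \<in> Lcone" and y: "y \<notin> Lcone"
  shows "r_o y \<le> 4 * norm (y - x)"
proof -
  have R: "rr y > 0" "\<bar>y$0\<bar> < rr y" using y unfolding Lcone_def by auto
  have "r_o y = (rr y - \<bar>y$0\<bar>) * ((rr y + \<bar>y$0\<bar>) / rr y)"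
    unfolding r_o_outside[OF y] by (simp add: power2_eq_square algebra_simps abs_mult_self_eq flip: abs_mult)
  also have "\<dots> \<le> (rr y - \<bar>y$0\<bar>) * 2"
    using R by (intro mult_left_mono) (auto simp: divide_le_eq)
  also have "rr y - \<bar>y$0\<bar> \<le> 2 * norm (y - x)"
    using abs_rr_diff_le[of y x] component_le_norm_cart[of "y - x" 0] x unfolding Lcone_def by auto
  finally show ?thesis using R by linarith
qed

definition monomial :: "('n \<Rightarrow> nat) \<Rightarrow> real^'n \<Rightarrow> real" where
  "monomial \<alpha> x = (\<Prod>i\<in>UNIV. x$i ^ \<alpha> i)"

lemma monomial_remove: "monomial \<alpha> x = x$j ^ \<alpha> j * (\<Prod>i\<in>UNIV-{j}. x$i ^ \<alpha> i)"
  unfolding monomial_def by (simp add: prod.remove)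

lemma monomial_fun_upd: "monomial (\<alpha>(j := k)) x = x$j ^ k * (\<Prod>i\<in>UNIV-{j}. x$i ^ \<alpha> i)"
proof -
  have "(\<Prod>i\<in>UNIV-{j}. x$i ^ (\<alpha>(j := k)) i) = (\<Prod>i\<in>UNIV-{j}. x$i ^ \<alpha> i)"
    by (rule prod.cong) auto
  then show ?thesis using monomial_remove[of "\<alpha>(j := k)" x j] by simp
qed

lemma monomial_fun_upd_add: "monomial (\<alpha>(j := \<alpha> j + k)) x = x$j ^ k * monomial \<alpha> x"
  unfolding monomial_fun_upd monomial_remove[of \<alpha> x j] by (simp add: power_add)

lemma monomial_fun_upd_Suc: "monomial (\<alpha>(j := Suc (\<alpha> j))) x = x$j * monomial \<alpha> x"
  using monomial_fun_upd_add[of \<alpha> j 1 x] by simp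

lemma sum_fun_upd_add_self: "sum (\<alpha>(j := k)) UNIV + \<alpha> j = sum \<alpha> (UNIV::'n::finite set) + k"
proof -
  have "sum (\<alpha>(j := k)) (UNIV - {j}) = sum \<alpha> (UNIV - {j})"
    by (rule sum.cong) auto
  then show ?thesis using sum.remove[of UNIV j "\<alpha>(j := k)"] sum.remove[of UNIV j \<alpha>] by (simp add: ac_simps)
qed

lemma has_gradient_monomial:
  "has_gradient (monomial \<alpha>) (\<lambda>j. of_nat (\<alpha> j) * monomial (\<alpha>(j := \<alpha> j - 1)) x) x"
proof -
  have "\<And>i. ((\<lambda>y. y$i ^ \<alpha> i) has_derivative (\<lambda>h. of_nat (\<alpha> i) * h$i * x$i ^ (\<alpha> i - 1))) (at x)"
    using has_derivative_power[OF bounded_linear_imp_has_derivative[OF bounded_linear_vec_nth]] by blast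
  then have "(monomial \<alpha> has_derivative
     (\<lambda>h. \<Sum>i\<in>UNIV. of_nat (\<alpha> i) * h$i * x$i ^ (\<alpha> i - 1) * (\<Prod>j\<in>UNIV - {i}. x$j ^ \<alpha> j))) (at x)"
    unfolding monomial_def[abs_def] by (rule has_derivative_prod)
  then show ?thesis unfolding has_gradient_def
    by (rule has_derivative_eq_rhs) (intro ext sum.cong refl, simp only: monomial_fun_upd mult_ac)
qed

lemma has_gradient_rr:
  assumes "x \<notin> Lcone"
  shows "has_gradient rr (\<lambda>j. if j = 0 then 0 else x$j / rr x) x"
proof -
  define Q where "Q y = (y$1)\<^sup>2 + (y$2)\<^sup>2 + (y$3)\<^sup>2 + (y$4)\<^sup>2" for y :: "real^5"
  have rr_Q: "rr = (\<lambda>y. sqrt (Q y))" unfolding rr_def Q_def by auto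
  have "Q x > 0" using rr_pos_outside[OF assms] unfolding rr_Q by simp
  let ?G = "\<lambda>j. of_nat 2 * x$1 ^ (2 - 1) * (if j = 1 then 1 else 0)
      + of_nat 2 * x$2 ^ (2 - 1) * (if j = 2 then 1 else 0)
      + of_nat 2 * x$3 ^ (2 - 1) * (if j = 3 then 1 else 0)
      + of_nat 2 * x$4 ^ (2 - 1) * (if j = 4 then 1 else 0)"
  have "has_gradient Q ?G x"
    unfolding Q_def[abs_def] by (intro has_gradient_add has_gradient_power has_gradient_component)
  then have "has_gradient rr (\<lambda>j. ?G j / (2 * sqrt (Q x))) x"
    unfolding rr_Q using \<open>Q x > 0\<close> by (rule has_gradient_sqrt)
  moreover have "?G j / (2 * sqrt (Q x)) = (if j = 0 then 0 else x$j / rr x)" for j :: 5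
    using exhaust_5[of j] by (elim disjE) (simp_all add: rr_Q)
  ultimately show ?thesis by (rule has_gradient_cong)
qed

text \<open>\<open>r_o\<close> without its case split, so that the gradient rules apply on all of \<open>- Lcone\<close>.\<close>

definition r_o_formula :: "real^5 \<Rightarrow> real" where
  "r_o_formula y = ((rr y)\<^sup>2 - (y$0)\<^sup>2) * inverse (rr y)"

lemma r_o_formula_outside: "x \<notin> Lcone \<Longrightarrow> r_o_formula x = r_o x"
  unfolding r_o_formula_def r_o_outside by (simp add: divide_inverse)

definition grad_r_o :: "real^5 \<Rightarrow> 5 \<Rightarrow> real" where
  "grad_r_o x j = (if j = 0 then - 2 * x$0 / rr x else x$j / rr x + (x$0)\<^sup>2 * x$j / (rr x)^3)"

lemma has_gradient_r_o_formula:
  assumes x: "x \<notin> Lcone"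
  shows "has_gradient r_o_formula (grad_r_o x) x"
proof -
  have R: "rr x > 0" using rr_pos_outside[OF x] .
  let ?G = "\<lambda>j. ((rr x)\<^sup>2 - (x$0)\<^sup>2) * (- ((if j = 0 then 0 else x$j / rr x) / (rr x)\<^sup>2))
      + (of_nat 2 * rr x ^ (2 - 1) * (if j = 0 then 0 else x$j / rr x)
         - of_nat 2 * x$0 ^ (2 - 1) * (if j = 0 then 1 else 0)) * inverse (rr x)"
  have "has_gradient r_o_formula ?G x"
    unfolding r_o_formula_def[abs_def]
    by (intro has_gradient_mult has_gradient_diff has_gradient_power has_gradient_component
        has_gradient_inverse has_gradient_rr x) (use R in simp)
  moreover have "?G j = grad_r_o x j" for j
    using R by (cases "j = 0") (simp_all add: grad_r_o_def field_simps power2_eq_square power3_eq_cube)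
  ultimately show ?thesis by (rule has_gradient_cong)
qed

section \<open>Terms \<open>c r_o\<^sup>a x\<^sup>\<alpha> / r\<^sup>b\<close> extended by zero on the cone\<close>

datatype cone_term = CTerm real nat "5 \<Rightarrow> nat" nat

fun eval_term :: "cone_term \<Rightarrow> real^5 \<Rightarrow> real" where
  "eval_term (CTerm c a \<alpha> b) x =
     (if x \<in> Lcone then 0 else c * r_o x ^ a * monomial \<alpha> x * inverse (rr x ^ b))"

definition eval_terms :: "cone_term list \<Rightarrow> real^5 \<Rightarrow> real" where
  "eval_terms P x = (\<Sum>t\<leftarrow>P. eval_term t x)"

lemma eval_terms_Nil [simp]: "eval_terms [] = (\<lambda>x. 0)"
  and eval_terms_Cons [simp]: "eval_terms (t # P) x = eval_term t x + eval_terms P x"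
  and eval_terms_append [simp]: "eval_terms (P @ Q) x = eval_terms P x + eval_terms Q x"
  by (simp_all add: eval_terms_def fun_eq_iff)

text \<open>Product rule, using \<open>\<partial>\<^sub>0 r_o = -2 x\<^sub>0 / r\<close>, \<open>\<partial>\<^sub>j r_o = x\<^sub>j / r + x\<^sub>0\<^sup>2 x\<^sub>j / r\<^sup>3\<close>
  and \<open>\<partial>\<^sub>j r = x\<^sub>j / r\<close> for \<open>j \<noteq> 0\<close>.\<close>

fun partial_term :: "5 \<Rightarrow> cone_term \<Rightarrow> cone_term list" where
  "partial_term j (CTerm c a \<alpha> b) = (if j = 0 then
     [CTerm (-2 * c * of_nat a) (a - 1) (\<alpha>(0 := \<alpha> 0 + 1)) (b + 1),
      CTerm (c * of_nat (\<alpha> 0)) a (\<alpha>(0 := \<alpha> 0 - 1)) b]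
   else
     [CTerm (c * of_nat a) (a - 1) (\<alpha>(j := \<alpha> j + 1)) (b + 1),
      CTerm (c * of_nat a) (a - 1) ((\<alpha>(j := \<alpha> j + 1))(0 := \<alpha> 0 + 2)) (b + 3),
      CTerm (c * of_nat (\<alpha> j)) a (\<alpha>(j := \<alpha> j - 1)) b,
      CTerm (- c * of_nat b) a (\<alpha>(j := \<alpha> j + 1)) (b + 2)])"

definition partial_terms :: "5 \<Rightarrow> cone_term list \<Rightarrow> cone_term list" where
  "partial_terms j P = concat (map (partial_term j) P)"

lemma eval_partial_terms_Cons [simp]:
  "eval_terms (partial_terms j (t # P)) x = eval_terms (partial_term j t) x + eval_terms (partial_terms j P) x"
  by (simp add: partial_terms_def)

text \<open>A term is flat of order \<open>n\<close> if it is \<open>O(dist(y, L)\<^sup>n)\<close> near \<open>L\<close> (see \<open>abs_eval_term_le\<close>).\<close>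

fun flat :: "nat \<Rightarrow> cone_term \<Rightarrow> bool" where
  "flat n (CTerm c a \<alpha> b) \<longleftrightarrow> n \<le> a \<and> n + b \<le> a + sum \<alpha> UNIV"

lemma flat_partial_term:
  assumes "flat (Suc n) t" and "u \<in> set (partial_term j t)"
  shows "flat n u"
proof -
  obtain c a \<alpha> b where t: "t = CTerm c a \<alpha> b" by (cases t)
  have up: "sum (\<alpha>(i := \<alpha> i + 1)) UNIV = sum \<alpha> UNIV + 1" for i
    using sum_fun_upd_add_self[of \<alpha> i "\<alpha> i + 1"] by simp
  have down: "sum (\<alpha>(i := \<alpha> i - 1)) UNIV + 1 \<ge> sum \<alpha> UNIV" for i
    using sum_fun_upd_add_self[of \<alpha> i "\<alpha> i - 1"] by simp
  have up3: "sum ((\<alpha>(j := \<alpha> j + 1))(0 := \<alpha> 0 + 2)) UNIV = sum \<alpha> UNIV + 3" if "j \<noteq> 0"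
    using sum_fun_upd_add_self[of "\<alpha>(j := \<alpha> j + 1)" 0 "\<alpha> 0 + 2"] up[of j] that by simp
  show ?thesis
    using assms up[of 0] up[of j] down[of 0] down[of j] up3 unfolding t
    by (cases "j = 0") (auto simp del: fun_upd_apply)
qed

lemma flat_partial_terms: "\<forall>t\<in>set P. flat (Suc n) t \<Longrightarrow> \<forall>u\<in>set (partial_terms j P). flat n u"
  unfolding partial_terms_def using flat_partial_term by auto

lemma eval_term_Lcone: "x \<in> Lcone \<Longrightarrow> eval_term t x = 0"
  by (cases t) auto

lemma eval_terms_Lcone: "x \<in> Lcone \<Longrightarrow> eval_terms P x = 0"
  by (induct P) (auto simp: eval_term_Lcone)

text \<open>The product rule for \<open>\<partial>\<^sub>j (c r_o\<^sup>a x\<^sup>\<alpha> / r\<^sup>b)\<close>, \<open>j \<noteq> 0\<close>, stated for abstract reals so that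
  \<open>field_simps\<close> does not unfold \<open>r_o\<close>, \<open>r\<close> or the monomials.\<close>

lemma partial_term_expansion:
  fixes R Ov M Mdn X0 Xj c :: real
  assumes R: "R > 0"
  shows "c * Ov ^ a * M * (- (of_nat b * R ^ (b - 1) * (Xj / R) / (R ^ b)\<^sup>2)) +
       (c * Ov ^ a * (of_nat aj * Mdn) + (c * (of_nat a * Ov ^ (a - 1) * (Xj / R + X0\<^sup>2 * Xj / R ^ 3)) + 0 * Ov ^ a) * M) * inverse (R ^ b)
     = c * of_nat a * Ov ^ (a - 1) * (Xj * M) * inverse (R ^ (b + 1))
       + (c * of_nat a * Ov ^ (a - 1) * (X0\<^sup>2 * (Xj * M)) * inverse (R ^ (b + 3))
       + (c * of_nat aj * Ov ^ a * Mdn * inverse (R ^ b)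
       + (- c * of_nat b * Ov ^ a * (Xj * M) * inverse (R ^ (b + 2)))))"
proof (cases b)
  case 0
  then show ?thesis using R by (simp add: field_simps power2_eq_square power3_eq_cube)
next
  case (Suc b')
  have "R ^ (b' + 4) = R * (R * (R * (R * R ^ b')))" by (simp add: power_add numeral_eq_Suc)
  then show ?thesis using R Suc by (simp add: field_simps power2_eq_square power3_eq_cube)
qed

lemma eval_partial_term_outside:
  assumes x: "x \<notin> Lcone" and j: "j \<noteq> 0"
  shows "eval_terms (partial_term j (CTerm c a \<alpha> b)) x =
      c * of_nat a * r_o x ^ (a - 1) * (x$j * monomial \<alpha> x) * inverse (rr x ^ (b + 1))
    + (c * of_nat a * r_o x ^ (a - 1) * ((x$0)\<^sup>2 * (x$j * monomial \<alpha> x)) * inverse (rr x ^ (b + 3))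
    + (c * of_nat (\<alpha> j) * r_o x ^ a * monomial (\<alpha>(j := \<alpha> j - 1)) x * inverse (rr x ^ b)
    + (- c * of_nat b * r_o x ^ a * (x$j * monomial \<alpha> x) * inverse (rr x ^ (b + 2)))))"
proof -
  have "monomial ((\<alpha>(j := \<alpha> j + 1))(0 := \<alpha> 0 + 2)) x = (x$0)\<^sup>2 * (x$j * monomial \<alpha> x)"
    using monomial_fun_upd_add[of "\<alpha>(j := \<alpha> j + 1)" 0 2 x] j by (simp add: monomial_fun_upd_Suc)
  then show ?thesis
    using x j by (simp del: fun_upd_apply add: monomial_fun_upd_Suc)
qed

lemma has_gradient_eval_term_outside:
  assumes x: "x \<notin> Lcone"
  shows "has_gradient (eval_term t) (\<lambda>j. eval_terms (partial_term j t) x) x"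
proof -
  obtain c a \<alpha> b where t: "t = CTerm c a \<alpha> b" by (cases t)
  have R: "rr x > 0" using rr_pos_outside[OF x] .
  have ro: "r_o_formula x = r_o x" using r_o_formula_outside[OF x] .
  define T where "T y = c * r_o_formula y ^ a * monomial \<alpha> y * inverse (rr y ^ b)" for y
  let ?G = "\<lambda>j. (c * r_o_formula x ^ a * monomial \<alpha> x)
        * (- (of_nat b * rr x ^ (b - 1) * (if j = 0 then 0 else x$j / rr x) / (rr x ^ b)\<^sup>2))
      + ((c * r_o_formula x ^ a) * (of_nat (\<alpha> j) * monomial (\<alpha>(j := \<alpha> j - 1)) x)
        + (c * (of_nat a * r_o_formula x ^ (a - 1) * grad_r_o x j) + 0 * r_o_formula x ^ a) * monomial \<alpha> x)
        * inverse (rr x ^ b)"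
  have "has_gradient T ?G x"
    unfolding T_def[abs_def]
    by (intro has_gradient_mult has_gradient_const has_gradient_power has_gradient_r_o_formula
        has_gradient_monomial has_gradient_inverse has_gradient_rr x) (use R in simp)
  moreover have "?G j = eval_terms (partial_term j t) x" for j
  proof (cases "j = 0")
    case True
    then show ?thesis unfolding t ro grad_r_o_def using x R
      by (simp add: monomial_fun_upd_Suc field_simps del: fun_upd_apply)
  next
    case False
    then show ?thesis unfolding t ro grad_r_o_def eval_partial_term_outside[OF x False]
      by (simp only: if_False partial_term_expansion[OF R])
  qed
  ultimately have "has_gradient T (\<lambda>j. eval_terms (partial_term j t) x) x"
    by (rule has_gradient_cong)
  then show ?thesis
  proof (rule has_gradient_transform_within_open[OF _ open_Compl_Lcone])
    show "x \<in> - Lcone" using x by simp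
    show "T y = eval_term t y" if "y \<in> - Lcone" for y
      using that r_o_formula_outside[of y] unfolding T_def t by simp
  qed
qed

lemma abs_monomial_le_rr:
  assumes "y \<notin> Lcone"
  shows "\<bar>monomial \<alpha> y\<bar> \<le> rr y ^ sum \<alpha> UNIV"
proof -
  have "\<bar>monomial \<alpha> y\<bar> = (\<Prod>i\<in>UNIV. \<bar>y$i\<bar> ^ \<alpha> i)"
    unfolding monomial_def by (simp add: abs_prod power_abs)
  also have "\<dots> \<le> (\<Prod>i\<in>UNIV. rr y ^ \<alpha> i)"
    by (intro prod_mono conjI power_mono abs_component_le_rr_outside[OF assms]) auto
  also have "\<dots> = rr y ^ sum \<alpha> UNIV" by (simp add: power_sum)
  finally show ?thesis .
qed

lemma abs_eval_term_le:
  assumes x: "x \<in> Lcone" and "flat s (CTerm c a \<alpha> b)"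
  shows "\<bar>eval_term (CTerm c a \<alpha> b) y\<bar>
    \<le> \<bar>c\<bar> * (4 * norm (y - x)) ^ s * (rr x + norm (y - x)) ^ (a + sum \<alpha> UNIV - b - s)"
proof (cases "y \<in> Lcone")
  case y: False
  have s: "s \<le> a" "s + b \<le> a + sum \<alpha> UNIV" using assms(2) by auto
  define e where "e = a + sum \<alpha> UNIV - b - s"
  have R: "rr y > 0" using rr_pos_outside[OF y] .
  have ro: "0 \<le> r_o y" "r_o y \<le> rr y" using r_o_bounds_outside[OF y] by auto
  have "\<bar>eval_term (CTerm c a \<alpha> b) y\<bar> = \<bar>c\<bar> * r_o y ^ s * r_o y ^ (a - s) * \<bar>monomial \<alpha> y\<bar> / rr y ^ b"
    using y ro s R by (simp add: abs_mult power_add[symmetric] divide_inverse)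
  also have "\<dots> \<le> \<bar>c\<bar> * (4 * norm (y - x)) ^ s * rr y ^ (a - s) * rr y ^ sum \<alpha> UNIV / rr y ^ b"
    using R ro r_o_le_dist_Lcone[OF x y]
    by (intro divide_right_mono mult_mono mult_nonneg_nonneg power_mono abs_monomial_le_rr[OF y]) auto
  also have "\<dots> = \<bar>c\<bar> * (4 * norm (y - x)) ^ s * rr y ^ e"
  proof -
    have "rr y ^ (a - s) * rr y ^ sum \<alpha> UNIV = rr y ^ e * rr y ^ b"
      unfolding e_def power_add[symmetric] using s by (simp add: algebra_simps)
    then show ?thesis using R by (simp add: field_simps)
  qed
  also have "\<dots> \<le> \<bar>c\<bar> * (4 * norm (y - x)) ^ s * (rr x + norm (y - x)) ^ e"
    using abs_rr_diff_le[of y x] R by (intro mult_left_mono power_mono) auto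
  finally show ?thesis unfolding e_def .
qed (simp add: rr_nonneg)

lemma isCont_eval_term_Lcone:
  assumes x: "x \<in> Lcone" and "flat 1 t"
  shows "isCont (eval_term t) x"
proof -
  obtain c a \<alpha> b where t: "t = CTerm c a \<alpha> b" by (cases t)
  define g where "g y = \<bar>c\<bar> * (4 * norm (y - x)) ^ 1 * (rr x + norm (y - x)) ^ (a + sum \<alpha> UNIV - b - 1)" for y
  have "(g \<longlongrightarrow> g x) (at x)"
    unfolding g_def by (intro tendsto_intros)
  then have "(g \<longlongrightarrow> 0) (at x)" unfolding g_def by simp
  moreover have "norm (eval_term t y) \<le> g y" for y
    using abs_eval_term_le[OF x, of 1 c a \<alpha> b y] assms(2) unfolding t g_def by simp
  ultimately have "(eval_term t \<longlongrightarrow> 0) (at x)"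
    using Lim_null_comparison[OF always_eventually] by blast
  then show ?thesis unfolding isCont_def eval_term_Lcone[OF x] .
qed

lemma has_gradient_eval_term_Lcone:
  assumes x: "x \<in> Lcone" and "flat 2 t"
  shows "has_gradient (eval_term t) (\<lambda>j. 0) x"
proof -
  obtain c a \<alpha> b where t: "t = CTerm c a \<alpha> b" by (cases t)
  define g where "g h = \<bar>c\<bar> * 16 * norm h * (rr x + norm h) ^ (a + sum \<alpha> UNIV - b - 2)" for h :: "real^5"
  have "(g \<longlongrightarrow> g 0) (at 0)"
    unfolding g_def by (intro tendsto_intros)
  then have g0: "(g \<longlongrightarrow> 0) (at 0)" unfolding g_def by simp
  have bound: "\<bar>eval_term t (x + h)\<bar> / norm h \<le> g h" if "h \<noteq> 0" for h
  proof -
    have "\<bar>eval_term t (x + h)\<bar> \<le> \<bar>c\<bar> * (4 * norm h) ^ 2 * (rr x + norm h) ^ (a + sum \<alpha> UNIV - b - 2)"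
      using abs_eval_term_le[OF x, of 2 c a \<alpha> b "x + h"] assms(2) unfolding t by simp
    then show ?thesis
      using that unfolding g_def by (simp add: divide_le_eq power2_eq_square mult_ac)
  qed
  have "\<forall>\<^sub>F h in at 0. norm (norm (eval_term t (x + h) - eval_term t x - 0) / norm h) \<le> g h"
    unfolding eventually_at_filter by (rule always_eventually) (simp add: bound eval_term_Lcone[OF x])
  then have "((\<lambda>h. norm (eval_term t (x + h) - eval_term t x - 0) / norm h) \<longlongrightarrow> 0) (at 0)"
    using g0 by (rule Lim_null_comparison)
  then show ?thesis
    unfolding has_gradient_def has_derivative_at by simp
qed

lemma has_gradient_eval_term:
  "flat 2 t \<Longrightarrow> has_gradient (eval_term t) (\<lambda>j. eval_terms (partial_term j t) x) x"
  by (cases "x \<in> Lcone")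
     (simp_all add: has_gradient_eval_term_Lcone eval_terms_Lcone has_gradient_eval_term_outside)

lemma has_gradient_eval_terms:
  "\<forall>t\<in>set P. flat 2 t \<Longrightarrow> has_gradient (eval_terms P) (\<lambda>j. eval_terms (partial_terms j P) x) x"
proof (induct P)
  case Nil
  then show ?case by (simp add: partial_terms_def has_gradient_const)
next
  case (Cons t P)
  then have "has_gradient (\<lambda>y. eval_term t y + eval_terms P y)
      (\<lambda>j. eval_terms (partial_term j t) x + eval_terms (partial_terms j P) x) x"
    by (intro has_gradient_add has_gradient_eval_term) auto
  then show ?case by simp
qed

lemma isCont_eval_terms: "\<forall>t\<in>set P. flat 1 t \<Longrightarrow> isCont (eval_terms P) x"
proof (induct P)
  case Nil
  then show ?case by simp
next
  case (Cons t P)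
  have "isCont (eval_term t) x"
    using Cons.prems has_gradient_imp_isCont[OF has_gradient_eval_term_outside]
      isCont_eval_term_Lcone by (cases "x \<in> Lcone") auto
  then have "isCont (\<lambda>y. eval_term t y + eval_terms P y) x"
    using Cons by (intro continuous_add) auto
  then show ?case by simp
qed

lemma Ck_eval_terms: "\<forall>t\<in>set P. flat (Suc n) t \<Longrightarrow> Ck n UNIV (eval_terms P)"
proof (induct n arbitrary: P)
  case 0
  then show ?case by (auto intro!: continuous_at_imp_continuous_on isCont_eval_terms)
next
  case (Suc n)
  have flat2: "\<forall>t\<in>set P. flat 2 t" using Suc.prems by (auto elim!: flat.elims)
  have "Ck n UNIV (\<lambda>x. frechet_derivative (eval_terms P) (at x) (axis j 1))" for j
    using has_gradient_frechet_derivative_axis[OF has_gradient_eval_terms[OF flat2]]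
      Suc.hyps[OF flat_partial_terms[OF Suc.prems]] by simp
  then show ?case
    using has_gradient_imp_differentiable[OF has_gradient_eval_terms[OF flat2]]
    by (auto simp: Basis_vec_def)
qed

lemma g_ml_eq_eval_terms: "g_ml m lr l = eval_terms [CTerm 1 m (\<lambda>i. l$i) lr]"
  unfolding g_ml_def f_l_def by (auto simp: fun_eq_iff eval_terms_def monomial_def mult_ac)

lemma Ck_g_ml:
  assumes "Suc n \<le> m" and "Suc n + lr \<le> m + (\<Sum>i\<in>UNIV. l$i)"
  shows "Ck n U (g_ml m lr l)"
  unfolding g_ml_eq_eval_terms
  by (rule Ck_subset[OF Ck_eval_terms]) (use assms in simp_all)

section \<open>Restriction to a segment crossing the cone\<close>

text \<open>\<open>test_point s t = (t, s/2, s/2, s/2, s/2)\<close> has \<open>r = s\<close>: for \<open>t > 0\<close> these points lie in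
  \<open>B\<^sub>a \<union> L\<close> when \<open>s < 1/a\<close>, and they enter the cone at \<open>t = s\<close>.\<close>

definition test_point :: "real \<Rightarrow> real \<Rightarrow> real^5" where
  "test_point s t = (\<chi> i. if i = 0 then t else s / 2)"

lemma test_point_eq_line: "test_point s t = test_point s 0 + t *\<^sub>R axis 0 1"
  unfolding test_point_def by (simp add: vec_eq_iff axis_def)

lemma test_point_nth: "test_point s t $ i = (if i = 0 then t else s / 2)"
  unfolding test_point_def by simp

lemma rr_test_point: "s \<ge> 0 \<Longrightarrow> rr (test_point s t) = s"
  unfolding rr_def test_point_def by (simp add: power_divide)

lemma test_point_in_Lcone_iff: "s \<ge> 0 \<Longrightarrow> test_point s t \<in> Lcone \<longleftrightarrow> s \<le> \<bar>t\<bar>"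
  unfolding Lcone_def by (simp add: rr_test_point test_point_nth)

lemma test_point_in_inside_cone_iff: "s \<ge> 0 \<Longrightarrow> test_point s t \<in> inside_cone \<longleftrightarrow> s < \<bar>t\<bar>"
  unfolding inside_cone_def by (simp add: rr_test_point test_point_nth)

lemma r_o_test_point: "0 \<le> t \<Longrightarrow> t < s \<Longrightarrow> r_o (test_point s t) = (s - t) * (s + t) / s"
  using test_point_in_Lcone_iff[of s t] r_o_outside[of "test_point s t"] rr_test_point[of s t]
  by (simp add: test_point_def power2_eq_square algebra_simps)

lemma g_ml_test_point:
  assumes "0 < t" and "t < s"
  shows "g_ml m lr l (test_point s t)
    = ((s - t) * (s + t) / s) ^ m / s ^ lr * (\<Prod>i\<in>UNIV. test_point s t $ i ^ l$i)"
  using assms test_point_in_Lcone_iff[of s t] rr_test_point[of s t] r_o_test_point[of t s]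
  unfolding g_ml_def f_l_def by (simp add: divide_inverse mult_ac)

lemma prod_test_point_ge:
  assumes "0 < s" and "s / 2 \<le> t"
  shows "(s / 2) ^ (\<Sum>i\<in>UNIV. l$i) \<le> (\<Prod>i\<in>UNIV. test_point s t $ i ^ l$i)"
proof -
  have "(s / 2) ^ (\<Sum>i\<in>UNIV. l$i) = (\<Prod>i\<in>UNIV. (s / 2) ^ l$i)" by (simp add: power_sum)
  also have "\<dots> \<le> (\<Prod>i\<in>UNIV. test_point s t $ i ^ l$i)"
    using assms by (intro prod_mono conjI power_mono) (auto simp: test_point_def)
  finally show ?thesis .
qed

lemma prod_test_point_half: "(\<Prod>i\<in>UNIV. test_point s (s / 2) $ i ^ l$i) = (s / 2) ^ (\<Sum>i\<in>UNIV. l$i)"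
  by (simp add: test_point_def power_sum)

lemma test_point_in_Btilde:
  assumes "0 < s" and "s < 1 / a" and "0 < t"
  shows "test_point s t \<in> Btilde a"
proof (cases "t < s")
  case True
  have "(s - t) * (s + t) / s \<le> s"
    using assms True by (simp add: divide_le_eq algebra_simps)
  then have "test_point s t \<in> B a"
    using assms True r_o_test_point[of t s] unfolding B_def by simp
  then show ?thesis unfolding Btilde_def by simp
next
  case False
  then show ?thesis
    using assms test_point_in_Lcone_iff[of s t] Lcone_subset_Btilde by auto
qed

lemma norm_test_point_le: "0 \<le> s \<Longrightarrow> 0 \<le> t \<Longrightarrow> norm (test_point s t) \<le> 2 * s + t"
  using norm_le_l1_cart[of "test_point s t"] by (simp add: sum_5 test_point_def)

lemma iterated_partial_g_ml_inside_cone: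
  "y \<in> inside_cone \<Longrightarrow> iterated_partial e j (g_ml m lr l) y = 0"
  by (rule iterated_partial_eq_0_on_open[OF open_inside_cone])
     (use inside_cone_subset_Lcone in \<open>auto simp: g_ml_def\<close>)

context
  fixes g :: "real^5 \<Rightarrow> real" and U :: "(real^5) set" and n :: nat and s :: real
  assumes Ck: "Ck n U g" and s: "0 < s" and U: "\<And>t. 0 < t \<Longrightarrow> test_point s t \<in> U"
    and vanishes_inside: "\<And>j y. y \<in> inside_cone \<Longrightarrow> iterated_partial (axis 0 1) j g y = 0"
begin

lemma has_real_derivative_iterated_partial_test_point:
  assumes "j < n" and "0 < t"
  shows "((\<lambda>t. iterated_partial (axis 0 1) j g (test_point s t))
    has_real_derivative iterated_partial (axis 0 1) (Suc j) g (test_point s t)) (at t)"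
proof -
  have "Ck (Suc (n - Suc j)) U (iterated_partial (axis 0 1) j g)"
    using Ck_iterated_partial[OF Ck, of "axis 0 1" j] assms(1) by (simp add: Suc_diff_Suc)
  then have "iterated_partial (axis 0 1) j g differentiable (at (test_point s 0 + t *\<^sub>R axis 0 1))"
    using U[OF assms(2)] by (simp flip: test_point_eq_line)
  from has_real_derivative_along_line[OF this] show ?thesis
    by (simp flip: test_point_eq_line)
qed

lemma isCont_iterated_partial_test_point:
  assumes "0 < t"
  shows "isCont (\<lambda>t. iterated_partial (axis 0 1) n g (test_point s t)) t"
proof -
  have "continuous_on U (iterated_partial (axis 0 1) n g)"
    using Ck_iterated_partial[OF Ck, of "axis 0 1" n] by (simp add: Ck_imp_continuous_on)
  moreover have "continuous_on {0<..} (test_point s)"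
    by (subst test_point_eq_line[abs_def]) (intro continuous_intros)
  ultimately have "continuous_on {0<..} (\<lambda>t. iterated_partial (axis 0 1) n g (test_point s t))"
    by (rule continuous_on_compose2) (use U in auto)
  then show ?thesis using assms by (simp add: continuous_on_eq_continuous_at)
qed

lemma iterated_partial_test_point_boundary:
  assumes "j \<le> n"
  shows "iterated_partial (axis 0 1) j g (test_point s s) = 0"
proof (rule isCont_zero_on_right[where h = "\<lambda>t. iterated_partial (axis 0 1) j g (test_point s t)"])
  show "isCont (\<lambda>t. iterated_partial (axis 0 1) j g (test_point s t)) s"
  proof (cases "j = n")
    case True
    then show ?thesis using isCont_iterated_partial_test_point s by simp
  next
    case False
    then show ?thesis
      using has_real_derivative_iterated_partial_test_point[of j s] assms s by (simp add: DERIV_isCont)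
  qed
  show "iterated_partial (axis 0 1) j g (test_point s t) = 0" if "s < t" for t
    using vanishes_inside test_point_in_inside_cone_iff[of s t] s that by simp
qed

text \<open>All lower derivatives vanish at the boundary point, so only Lagrange's remainder survives.\<close>

lemma Taylor_test_point:
  assumes "1 \<le> n" and "0 < \<tau>" and "\<tau> < s"
  obtains \<xi> where "\<tau> < \<xi>" and "\<xi> < s"
    and "g (test_point s \<tau>) = iterated_partial (axis 0 1) n g (test_point s \<xi>) / fact n * (\<tau> - s) ^ n"
proof -
  define h where "h j t = iterated_partial (axis 0 1) j g (test_point s t)" for j t
  have "DERIV (h j) t :> h (Suc j) t" if "j < n" and "0 < t" for j t
    unfolding h_def using that by (rule has_real_derivative_iterated_partial_test_point)
  then have "\<exists>t. (if \<tau> < s then \<tau> < t \<and> t < s else s < t \<and> t < \<tau>) \<and>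
      h 0 \<tau> = (\<Sum>j<n. h j s / fact j * (\<tau> - s) ^ j) + h n t / fact n * (\<tau> - s) ^ n"
    using assms by (intro Taylor[where diff = h and f = "h 0" and a = \<tau> and b = s]) auto
  moreover have "h j s = 0" if "j < n" for j
    unfolding h_def using that by (simp add: iterated_partial_test_point_boundary)
  ultimately show ?thesis using that assms unfolding h_def by auto
qed

end

section \<open>Failure of one more derivative\<close>

lemma g_ml_test_point_ge:
  assumes "0 < s" and "s / 2 \<le> t" and "t < s"
  shows "(s - t) ^ m * ((s / 2) ^ (\<Sum>i\<in>UNIV. l$i) / s ^ lr) \<le> g_ml m lr l (test_point s t)"
proof -
  have "(s - t) ^ m * 1 \<le> (s - t) ^ m * ((s + t) / s) ^ m"
    using assms by (intro mult_left_mono one_le_power) (auto simp: le_divide_eq)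
  then have "(s - t) ^ m \<le> ((s - t) * (s + t) / s) ^ m"
    by (simp add: power_mult_distrib[symmetric])
  then have "(s - t) ^ m / s ^ lr * (s / 2) ^ (\<Sum>i\<in>UNIV. l$i)
      \<le> ((s - t) * (s + t) / s) ^ m / s ^ lr * (\<Prod>i\<in>UNIV. test_point s t $ i ^ l$i)"
    using assms prod_test_point_ge[OF assms(1,2), of l] by (intro mult_mono divide_right_mono) auto
  moreover have "0 < t" using assms by linarith
  ultimately show ?thesis by (simp add: g_ml_test_point[OF _ assms(3)])
qed

lemma g_ml_test_point_half:
  assumes "0 < s"
  shows "g_ml m lr l (test_point s (s / 2))
    = (3/4) ^ m * (1/2) ^ (\<Sum>i\<in>UNIV. l$i) * s ^ (m + (\<Sum>i\<in>UNIV. l$i)) / s ^ lr"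
proof -
  have "(s - s / 2) * (s + s / 2) / s = 3/4 * s" using assms by (simp add: field_simps)
  then have "g_ml m lr l (test_point s (s / 2)) = (3/4 * s) ^ m / s ^ lr * (s / 2) ^ (\<Sum>i\<in>UNIV. l$i)"
    using assms by (simp add: g_ml_test_point prod_test_point_half)
  then show ?thesis by (simp add: power_mult_distrib power_divide power_add field_simps)
qed

lemma vanishing_inside_cone_imp_zero_at_0:
  fixes f :: "real^5 \<Rightarrow> real"
  assumes "continuous_on U f" and "Lcone \<subseteq> U" and "\<And>y. y \<in> inside_cone \<Longrightarrow> f y = 0"
  shows "f 0 = 0"
proof -
  have on_axis: "t *\<^sub>R axis 0 1 \<in> inside_cone" if "t \<noteq> 0" for t :: real
    using that unfolding inside_cone_def rr_def by (simp add: axis_def)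
  have "continuous_on UNIV (\<lambda>t::real. t *\<^sub>R (axis 0 1 :: real^5))" by (intro continuous_intros)
  moreover have "t *\<^sub>R axis 0 1 \<in> U" for t :: real
    using on_axis[of t] inside_cone_subset_Lcone assms(2) zero_in_Lcone by (cases "t = 0") auto
  then have "(\<lambda>t::real. t *\<^sub>R axis 0 1) ` UNIV \<subseteq> U" by auto
  ultimately have "continuous_on UNIV (\<lambda>t::real. f (t *\<^sub>R axis 0 1))"
    by (rule continuous_on_compose2[OF assms(1)])
  then have "isCont (\<lambda>t::real. f (t *\<^sub>R axis 0 1)) 0"
    by (simp add: continuous_on_eq_continuous_at)
  then have "(\<lambda>t::real. f (t *\<^sub>R axis 0 1)) 0 = 0"
    by (rule isCont_zero_on_right) (simp add: assms(3) on_axis)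
  then show ?thesis by simp
qed

lemma small_on_short_test_segments:
  fixes F :: "real^5 \<Rightarrow> real"
  assumes "continuous_on (Btilde a) F" and "F 0 = 0" and "0 < a" and "0 < \<epsilon>"
  obtains s0 where "0 < s0" and "s0 < 1 / a"
    and "\<And>s t. 0 < s \<Longrightarrow> s < s0 \<Longrightarrow> 0 < t \<Longrightarrow> t \<le> s \<Longrightarrow> \<bar>F (test_point s t)\<bar> < \<epsilon>"
proof -
  have "0 \<in> Btilde a" using zero_in_Lcone Lcone_subset_Btilde by auto
  then obtain \<delta> where "0 < \<delta>" and \<delta>: "\<forall>y\<in>Btilde a. dist y 0 < \<delta> \<longrightarrow> dist (F y) (F 0) < \<epsilon>"
    using continuous_on_iff[THEN iffD1, OF assms(1)] assms(4) by blast
  define s0 where "s0 = min (1 / (2 * a)) (\<delta> / 3)"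
  have "0 < s0" "s0 < 1 / a" using assms(3) \<open>0 < \<delta>\<close> by (auto simp: s0_def min_def field_simps)
  moreover have "\<bar>F (test_point s t)\<bar> < \<epsilon>" if "0 < s" "s < s0" "0 < t" "t \<le> s" for s t
  proof -
    have "test_point s t \<in> Btilde a"
      using test_point_in_Btilde[of s a t] that \<open>s0 < 1 / a\<close> by simp
    moreover have "dist (test_point s t) 0 < \<delta>"
      using norm_test_point_le[of s t] that unfolding s0_def by simp
    ultimately show ?thesis using \<delta> assms(2) by (simp add: dist_real_def)
  qed
  ultimately show ?thesis using that by blast
qed

text \<open>At the point where a test segment enters the cone, \<open>g\<close> vanishes exactly to order \<open>m\<close>.\<close>

lemma not_Ck_order_m:
  assumes a: "0 < a" and m: "1 \<le> m"
  shows "\<not> Ck m (Btilde a) (g_ml m lr l)"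
proof
  let ?g = "g_ml m lr l" and ?D = "iterated_partial (axis 0 1) m (g_ml m lr l)"
  assume Ck: "Ck m (Btilde a) ?g"
  define s where "s = 1 / (2 * a)"
  have s: "0 < s" "s < 1 / a" using a by (auto simp: s_def field_simps)
  note U = test_point_in_Btilde[OF s]
  note vanishes_inside = iterated_partial_g_ml_inside_cone[of _ "axis 0 1" _ m lr l]
  define c where "c = (s / 2) ^ (\<Sum>i\<in>UNIV. l$i) / s ^ lr"
  have c: "0 < fact m * c" using s by (simp add: c_def)
  have "isCont (\<lambda>t. ?D (test_point s t)) s"
    by (rule isCont_iterated_partial_test_point[OF Ck s(1) U vanishes_inside s(1)])
  moreover have "?D (test_point s s) = 0"
    by (rule iterated_partial_test_point_boundary[OF Ck s(1) U vanishes_inside order.refl])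
  ultimately have "(\<lambda>t. ?D (test_point s t)) \<midarrow>s\<rightarrow> 0" unfolding isCont_def by simp
  from LIM_D[OF this c] obtain \<delta> where "0 < \<delta>"
    and \<delta>: "\<And>\<xi>. \<xi> \<noteq> s \<and> norm (\<xi> - s) < \<delta> \<longrightarrow> norm (?D (test_point s \<xi>) - 0) < fact m * c"
    by blast
  define \<tau> where "\<tau> = max (s / 2) (s - \<delta> / 2)"
  have \<tau>: "0 < \<tau>" "\<tau> < s" "s / 2 \<le> \<tau>" "s - \<tau> < \<delta>" using s \<open>0 < \<delta>\<close> unfolding \<tau>_def by auto
  obtain \<xi> where \<xi>: "\<tau> < \<xi>" "\<xi> < s" and taylor: "?g (test_point s \<tau>) = ?D (test_point s \<xi>) / fact m * (\<tau> - s) ^ m"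
    using Taylor_test_point[OF Ck s(1) U vanishes_inside m \<tau>(1,2)] .
  have "\<bar>?g (test_point s \<tau>)\<bar> = \<bar>?D (test_point s \<xi>)\<bar> / fact m * (s - \<tau>) ^ m"
    unfolding taylor using \<tau> by (simp add: abs_mult power_abs abs_minus_commute)
  also have "\<dots> < (s - \<tau>) ^ m * c"
    using \<delta>[of \<xi>] \<xi> \<tau> by (simp add: divide_less_eq mult_ac)
  finally show False
    using g_ml_test_point_ge[OF s(1) \<tau>(3,2), of m l lr] unfolding c_def by linarith
qed

text \<open>Here \<open>g\<close> is homogeneous of degree \<open>d\<close>, so its \<open>d\<close>-th derivative is homogeneous of degree 0;
  as it vanishes on the \<open>x\<^sub>0\<close>-axis, continuity at the origin would force \<open>g = 0\<close>.\<close>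

lemma not_Ck_homogeneous:
  assumes a: "0 < a" and d: "1 \<le> d" and deg: "m + (\<Sum>i\<in>UNIV. l$i) = lr + d"
  shows "\<not> Ck d (Btilde a) (g_ml m lr l)"
proof
  let ?g = "g_ml m lr l" and ?D = "iterated_partial (axis 0 1) d (g_ml m lr l)"
  assume Ck: "Ck d (Btilde a) ?g"
  define c :: real where "c = (3/4) ^ m * (1/2) ^ (\<Sum>i\<in>UNIV. l$i)"
  have c: "0 < fact d * c * 2 ^ d" by (simp add: c_def)
  have cont: "continuous_on (Btilde a) ?D"
    using Ck_iterated_partial[OF Ck, of "axis 0 1" d] by (simp add: Ck_imp_continuous_on)
  moreover have "?D 0 = 0"
    using cont Lcone_subset_Btilde iterated_partial_g_ml_inside_cone
    by (rule vanishing_inside_cone_imp_zero_at_0)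
  ultimately obtain s0 where s0: "0 < s0" "s0 < 1 / a"
    and small: "\<And>s t. 0 < s \<Longrightarrow> s < s0 \<Longrightarrow> 0 < t \<Longrightarrow> t \<le> s \<Longrightarrow> \<bar>?D (test_point s t)\<bar> < fact d * c * 2 ^ d"
    using small_on_short_test_segments[OF cont _ a c] by blast
  define s where "s = s0 / 2"
  have s: "0 < s" "s < 1 / a" "s < s0" using s0 by (auto simp: s_def)
  have "0 < s / 2" "s / 2 < s" using s(1) by auto
  then obtain \<xi> where \<xi>: "s / 2 < \<xi>" "\<xi> < s"
    and taylor: "?g (test_point s (s / 2)) = ?D (test_point s \<xi>) / fact d * (s / 2 - s) ^ d"
    using Taylor_test_point[OF Ck s(1) test_point_in_Btilde[OF s(1,2)] iterated_partial_g_ml_inside_cone d]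
    by blast
  have "\<bar>?g (test_point s (s / 2))\<bar> = \<bar>?D (test_point s \<xi>)\<bar> / fact d * (s / 2) ^ d"
    unfolding taylor using s by (simp add: abs_mult power_abs)
  also have "\<dots> < c * s ^ d"
    using small[OF s(1,3), of \<xi>] \<xi> s by (simp add: divide_less_eq power_divide mult_ac)
  finally show False
    using g_ml_test_point_half[OF s(1), of m lr l] s unfolding deg c_def by (simp add: power_add)
qed

lemma g_ml_not_continuous:
  assumes a: "0 < a" and deg: "m + (\<Sum>i\<in>UNIV. l$i) \<le> lr"
  shows "\<not> continuous_on (Btilde a) (g_ml m lr l)"
proof
  define c :: real where "c = (3/4) ^ m * (1/2) ^ (\<Sum>i\<in>UNIV. l$i)"
  have c: "0 < c" by (simp add: c_def)
  assume cont: "continuous_on (Btilde a) (g_ml m lr l)"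
  have "g_ml m lr l 0 = 0" using zero_in_Lcone by (simp add: g_ml_def)
  then obtain s0 where s0: "0 < s0" "s0 < 1 / a"
    and small: "\<And>s t. 0 < s \<Longrightarrow> s < s0 \<Longrightarrow> 0 < t \<Longrightarrow> t \<le> s \<Longrightarrow> \<bar>g_ml m lr l (test_point s t)\<bar> < c"
    using small_on_short_test_segments[OF cont _ a c] by blast
  define s where "s = min (s0 / 2) 1"
  have s: "0 < s" "s < s0" "s \<le> 1" using s0 by (auto simp: s_def)
  have "s ^ lr \<le> s ^ (m + (\<Sum>i\<in>UNIV. l$i))"
    using s deg by (intro power_decreasing) auto
  then have "1 \<le> s ^ (m + (\<Sum>i\<in>UNIV. l$i)) / s ^ lr"
    using s by simp
  then have "c * 1 \<le> c * (s ^ (m + (\<Sum>i\<in>UNIV. l$i)) / s ^ lr)"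
    using c by (intro mult_left_mono) auto
  also have "\<dots> = g_ml m lr l (test_point s (s / 2))"
    unfolding g_ml_test_point_half[OF s(1)] c_def by simp
  finally show False using small[OF s(1,2), of "s / 2"] s by simp
qed

theorem lemma2:
  fixes a :: real and m lr :: nat and l :: "nat^5" and k :: int
  assumes "a > 0" and "m \<ge> 1"
    and "k = min (int m) (int m + s_l lr l)"
  shows "(k \<ge> 1 \<longrightarrow> Ck (nat (k - 1)) (Btilde a) (g_ml m lr l))
         \<and> \<not> Ck (nat k) (Btilde a) (g_ml m lr l)"
proof -
  define deg where "deg = (\<Sum>i\<in>UNIV. l$i)"
  have k: "k = min (int m) (int m + int deg - int lr)"
    using assms(3) unfolding s_l_def deg_def by (simp add: of_nat_sum)
  consider "lr \<le> deg" | "deg < lr" "lr < m + deg" | "m + deg \<le> lr" by linarith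
  then show ?thesis
  proof cases
    case 1
    then have "nat (k - 1) = m - 1" "nat k = m" using k by auto
    moreover have "Ck (m - 1) (Btilde a) (g_ml m lr l)"
      by (rule Ck_g_ml) (use 1 assms(2) in \<open>simp_all add: deg_def\<close>)
    ultimately show ?thesis using not_Ck_order_m[OF assms(1,2)] by simp
  next
    case 2
    define d where "d = m + deg - lr"
    have "nat (k - 1) = d - 1" "nat k = d" using k 2 by (auto simp: d_def)
    moreover have "Ck (d - 1) (Btilde a) (g_ml m lr l)"
      by (rule Ck_g_ml) (use 2 in \<open>simp_all add: d_def deg_def\<close>)
    moreover have "\<not> Ck d (Btilde a) (g_ml m lr l)"
      by (rule not_Ck_homogeneous[OF assms(1)]) (use 2 in \<open>simp_all add: d_def deg_def\<close>)
    ultimately show ?thesis by simp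
  next
    case 3
    then have "nat k = 0" "\<not> k \<ge> 1" using k by auto
    then show ?thesis using g_ml_not_continuous[OF assms(1)] 3 unfolding deg_def by simp
  qed
qed

end
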